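(* Fix an integer horizon $T\ge 1$, constants $r_f>0$, $a\in\mathbb{R}$, $\sigma>0$, $\lambda>0$, $b\in\mathbb{R}$ and $w\in\mathbb{R}$, and set $\rho_t=r_f^{-(T-t)}$. Let $K\in\mathbb{R}$, $B>0$, $C>0$, and let $\pi^0$ be the feedback policy $$\pi^0_t(u;x,w)=\mathcal{N}\big(u\mid K(x-\rho_t w),\ \lambda B C^{T-t-1}\big),\qquad t=0,\dots,T-1.$$ Put $A=r_f^2+(a^2+\sigma^2)K^2+2r_f aK$, assume $CA\neq 1$, and define $$f(t)=\frac{\lambda B(a^2+\sigma^2)[1-(CA)^{T-t}]}{1-CA}-\frac{\lambda}{2}\ln(2\pi\lambda B)(T-t)-\frac{\lambda}{2}(T-t)-\frac{\lambda}{2}\ln C\sum_{i=0}^{T-t-1}i-(w-b)^2 .$$ Then the value function of $\pi^0$ is $$J^{\pi^0}(t,x;w)=A^{T-t}(x-\rho_t w)^2+f(t).$$ Define iteratively, for $k\ge 0$ and $t$ with $t+k+1\le T$: $\pi^{k+1}_t(\cdot;x,w)$ is the density $\pi$ on $\mathbb{R}$ minimizing $$\mathbb{E}\Big[J^{\pi^k}(t+1,r_f x+r_t u;w)+\lambda\int_{\mathbb{R}}\pi(v)\ln\pi(v)\,dv\Big],\quad u\sim\pi,$$ and $J^{\pi^{k+1}}(t,x;w)$ is the corresponding minimal value. Then for every $k\ge1$ and $t$ with $k\le T-t$, $$\pi_t^k(u;x,w)=\mathcal{N}\Big(u\ \Big|\ -\frac{a r_f(x-\rho_t w)}{a^2+\sigma^2},\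 \frac{\lambda}{2(a^2+\sigma^2)A^{T-t-k}}\Big(\frac{a^2+\sigma^2}{\sigma^2 r_f^2}\Big)^{k-1}\Big),$$ $$J^{\pi^k}(t,x;w)=A^{T-t-k}\Big(\frac{\sigma^2 r_f^2}{a^2+\sigma^2}\Big)^k(x-\rho_t w)^2+\frac{\lambda}{2}k\ln\Big(\frac{a^2+\sigma^2}{\pi\lambda}\Big)+\frac{\lambda}{2}\sum_{i=0}^{k-1}i\ln\Big(\frac{\sigma^2 r_f^2}{a^2+\sigma^2}\Big)+\frac{\lambda\ln A}{2}k(T-t-k)+f(t+k).$$
   Context: Market: risk-free (gross) return $r_f$ per period; the risky asset's excess return from period $t$ to $t+1$ is a random variable $r_t$, the $r_t$ ($t=0,\dots,T-1$) being independent, each with mean $a$ and variance $\sigma^2$. Wealth evolves as $x_{t+1}=r_f x_t+r_t u_t$, where under a feedback policy $\pi=(\pi_0,\dots,\pi_{T-1})$ the risky investment $u_t$ is drawn from the probability density $\pi_t(\cdot;x_t,w)$ on $\mathbb{R}$, independently of $r_t$ (and $r_t$ is independent of the history up to time $t$). The value function of a policy $\pi$ is $$J^{\pi}(t,x;w)=\mathbb{E}\Big[(x_T-w)^2+\lambda\sum_{s=t}^{T-1}\int_{\mathbb{R}}\pi_s(u)\ln\pi_s(u)\,du\ \Big|\ x_t=x\Big]-(w-b)^2,$$ so $J^{\pi}(T,x;w)=(x-w)^2-(w-b)^2$. $\mathcal{N}(u\mid m,v)$ denotes the Gaussian density with mean $m$ and variance $v$. The symbol $\pi$ without subscript or superscript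 inside logarithms denotes the number $3.14159\ldots$. *)

theory Defs
  imports "HOL-Probability.Probability"
begin

definition gauss :: "real \<Rightarrow> real \<Rightarrow> real \<Rightarrow> real" where
  "gauss m v u = normal_density m (sqrt v) u"

text \<open>Admissible probability densities on the real line (finite second moment,
  integrable p ln p; note ln 0 = 0 in Isabelle, matching 0 ln 0 = 0).\<close>
definition density_adm :: "(real \<Rightarrow> real) \<Rightarrow> bool" where
  "density_adm p \<longleftrightarrow> p \<in> borel_measurable borel \<and> (\<forall>u. 0 \<le> p u)
     \<and> integrable lborel p \<and> (\<integral>u. p u \<partial>lborel) = 1
     \<and> integrable lborel (\<lambda>u. p u * u\<^sup>2)
     \<and> integrable lborel (\<lambda>u. p u * ln (p u))"

text \<open>One-step cost at time t, state x: E[V(r_f x + r_t u) + lam * int p ln p], u ~ p,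
  r_t ~ R t independent of u.\<close>
definition stage_cost ::
  "(nat \<Rightarrow> real measure) \<Rightarrow> real \<Rightarrow> real \<Rightarrow> nat \<Rightarrow> real \<Rightarrow> (real \<Rightarrow> real) \<Rightarrow> (real \<Rightarrow> real) \<Rightarrow> real" where
  "stage_cost R rf lam t x V p =
     (\<integral>u. p u * (\<integral>r. V (rf * x + r * u) \<partial>R t) \<partial>lborel)
     + lam * (\<integral>u. p u * ln (p u) \<partial>lborel)"

text \<open>Value of a feedback policy pol (pol t x = density of u_t given x_t = x),
  by backward policy evaluation; argument n = number of remaining periods.\<close>
primrec polval_aux ::
  "(nat \<Rightarrow> real measure) \<Rightarrow> real \<Rightarrow> real \<Rightarrow> real \<Rightarrow> real \<Rightarrow> nat
    \<Rightarrow> (nat \<Rightarrow> real \<Rightarrow> real \<Rightarrow> real) \<Rightarrow> nat \<Rightarrow> real \<Rightarrow> real" where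
  "polval_aux R rf lam w b T pol 0 = (\<lambda>x. (x - w)\<^sup>2 - (w - b)\<^sup>2)"
| "polval_aux R rf lam w b T pol (Suc n) =
     (\<lambda>x. stage_cost R rf lam (T - Suc n) x (polval_aux R rf lam w b T pol n) (pol (T - Suc n) x))"

definition value_fun ::
  "(nat \<Rightarrow> real measure) \<Rightarrow> real \<Rightarrow> real \<Rightarrow> real \<Rightarrow> real \<Rightarrow> nat
    \<Rightarrow> (nat \<Rightarrow> real \<Rightarrow> real \<Rightarrow> real) \<Rightarrow> nat \<Rightarrow> real \<Rightarrow> real" where
  "value_fun R rf lam w b T pol t x = polval_aux R rf lam w b T pol (T - t) x"

definition rho :: "nat \<Rightarrow> real \<Rightarrow> nat \<Rightarrow> real" where
  "rho T rf t = inverse (rf ^ (T - t))"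

definition Acoef :: "real \<Rightarrow> real \<Rightarrow> real \<Rightarrow> real \<Rightarrow> real" where
  "Acoef rf a sg K = rf\<^sup>2 + (a\<^sup>2 + sg\<^sup>2) * K\<^sup>2 + 2 * rf * a * K"

definition fcoef ::
  "nat \<Rightarrow> real \<Rightarrow> real \<Rightarrow> real \<Rightarrow> real \<Rightarrow> real \<Rightarrow> real \<Rightarrow> real \<Rightarrow> real \<Rightarrow> real \<Rightarrow> nat \<Rightarrow> real" where
  "fcoef T rf a sg lam b w K B C t =
     (let A = Acoef rf a sg K in
      lam * B * (a\<^sup>2 + sg\<^sup>2) * (1 - (C * A) ^ (T - t)) / (1 - C * A)
      - lam / 2 * ln (2 * pi * lam * B) * real (T - t)
      - lam / 2 * real (T - t)
      - lam / 2 * ln C * (\<Sum>i<T - t. real i)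
      - (w - b)\<^sup>2)"

end

theory Submission
  imports Defs
begin

(* Every value function that occurs is a quadratic alpha (y - c)^2 + beta in the wealth, and
   against such a continuation value the stage cost of a density q depends only on the first two
   moments of q and on its entropy. For the Gaussian policy pi^0 this is an explicit computation
   which multiplies the leading coefficient by A. For the improvement step, completing the square
   in u writes the stage cost as a constant plus lambda times the relative entropy of q with
   respect to an explicit Gaussian; by Gibbs' inequality that Gaussian is the a.e. unique
   minimiser, the constant is the new value, and the leading coefficient gets multiplied by
   sigma^2 r_f^2 / (a^2 + sigma^2). *)

definition has_mean_var :: "real measure \<Rightarrow> real \<Rightarrow> real \<Rightarrow> bool" where
  "has_mean_var M m v \<longleftrightarrow> prob_space M \<and> sets M = sets borel \<and> integrable M (\<lambda>r. r\<^sup>2)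
     \<and> (\<integral>r. r \<partial>M) = m \<and> (\<integral>r. (r - m)\<^sup>2 \<partial>M) = v"

lemma has_mean_var_integral_affine_square:
  assumes "has_mean_var M m v"
  shows "(\<integral>r. \<alpha> * (d + r * u)\<^sup>2 + \<beta> \<partial>M) = \<alpha> * (d\<^sup>2 + 2 * d * m * u + (m\<^sup>2 + v) * u\<^sup>2) + \<beta>"
proof -
  interpret prob_space M
    using assms by (simp add: has_mean_var_def)
  have i2: "integrable M (\<lambda>r. r\<^sup>2)" and mean: "expectation (\<lambda>r. r) = m"
    and var: "variance (\<lambda>r. r) = v"
    using assms by (simp_all add: has_mean_var_def)
  have "(\<lambda>r. r) \<in> borel_measurable M"
    using assms measurable_ident_sets by (auto simp: has_mean_var_def)
  then have i1: "integrable M (\<lambda>r. r)"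
    using i2 by (rule square_integrable_imp_integrable)
  have second: "expectation (\<lambda>r. r\<^sup>2) = m\<^sup>2 + v"
    using variance_eq[OF i1 i2] mean var by simp
  have "(\<lambda>r. \<alpha> * (d + r * u)\<^sup>2 + \<beta>) = (\<lambda>r. (\<alpha> * u\<^sup>2) * r\<^sup>2 + (2 * \<alpha> * d * u) * r + (\<alpha> * d\<^sup>2 + \<beta>))"
    by (simp add: fun_eq_iff power2_eq_square algebra_simps)
  then show ?thesis
    using i1 i2 second mean by (simp add: prob_space algebra_simps)
qed

lemma stage_cost_quadratic:
  assumes "has_mean_var (R t) m v"
  shows "stage_cost R rf lam t x (\<lambda>y. \<alpha> * (y - c)\<^sup>2 + \<beta>) q
    = (\<integral>u. q u * (\<alpha> * ((rf * x - c)\<^sup>2 + 2 * (rf * x - c) * m * u + (m\<^sup>2 + v) * u\<^sup>2) + \<beta>) \<partial>lborel)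
      + lam * (\<integral>u. q u * ln (q u) \<partial>lborel)"
proof -
  have "(\<integral>r. \<alpha> * (rf * x + r * u - c)\<^sup>2 + \<beta> \<partial>R t)
      = \<alpha> * ((rf * x - c)\<^sup>2 + 2 * (rf * x - c) * m * u + (m\<^sup>2 + v) * u\<^sup>2) + \<beta>" for u
    using has_mean_var_integral_affine_square[OF assms, of \<alpha> "rf * x - c" u \<beta>]
    by (simp add: algebra_simps)
  then show ?thesis
    by (simp add: stage_cost_def)
qed

lemma gauss_eq_normal_density: "gauss m v = normal_density m (sqrt v)"
  by (simp add: fun_eq_iff gauss_def)

lemma gauss_pos: "0 < v \<Longrightarrow> 0 < gauss m v u"
  by (simp add: gauss_def normal_density_pos)

lemma ln_gauss:
  assumes "0 < v"
  shows "ln (gauss m v u) = - ln (2 * pi * v) / 2 - (u - m)\<^sup>2 / (2 * v)"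
  using assms by (simp add: gauss_def normal_density_def ln_mult ln_div ln_sqrt) (simp add: field_simps)

lemma gauss_centered_moments:
  assumes "0 < v"
  shows "integrable lborel (gauss m v)" "integrable lborel (\<lambda>u. gauss m v u * (u - m))"
    "integrable lborel (\<lambda>u. gauss m v u * (u - m)\<^sup>2)"
    "(\<integral>u. gauss m v u \<partial>lborel) = 1" "(\<integral>u. gauss m v u * (u - m) \<partial>lborel) = 0"
    "(\<integral>u. gauss m v u * (u - m)\<^sup>2 \<partial>lborel) = v"
proof -
  have s: "0 < sqrt v" using assms by simp
  show "integrable lborel (gauss m v)" "(\<integral>u. gauss m v u \<partial>lborel) = 1"
    using s by (simp_all add: gauss_eq_normal_density)
  show "integrable lborel (\<lambda>u. gauss m v u * (u - m))"
    using integrable_normal_moment[OF s, of m 1] by (simp add: gauss_def)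
  show "integrable lborel (\<lambda>u. gauss m v u * (u - m)\<^sup>2)"
    using integrable_normal_moment[OF s, of m 2] by (simp add: gauss_def)
  show "(\<integral>u. gauss m v u * (u - m) \<partial>lborel) = 0"
    using integral_normal_moment_odd[OF s, of m 0] by (simp add: gauss_def)
  show "(\<integral>u. gauss m v u * (u - m)\<^sup>2 \<partial>lborel) = v"
    using integral_normal_moment_even[OF s, of m 1] assms by (simp add: gauss_def)
qed

lemma gauss_mult_quadratic_eq:
  "gauss m v u * (c0 + c1 * u + c2 * u\<^sup>2)
     = (c0 + c1 * m + c2 * m\<^sup>2) * gauss m v u + (c1 + 2 * c2 * m) * (gauss m v u * (u - m))
       + c2 * (gauss m v u * (u - m)\<^sup>2)"
  by (simp add: power2_eq_square algebra_simps)

lemma integrable_gauss_quadratic: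
  "0 < v \<Longrightarrow> integrable lborel (\<lambda>u. gauss m v u * (c0 + c1 * u + c2 * u\<^sup>2))"
  unfolding gauss_mult_quadratic_eq by (simp add: gauss_centered_moments)

lemma integral_gauss_quadratic:
  "0 < v \<Longrightarrow> (\<integral>u. gauss m v u * (c0 + c1 * u + c2 * u\<^sup>2) \<partial>lborel) = c0 + c1 * m + c2 * (v + m\<^sup>2)"
  unfolding gauss_mult_quadratic_eq
  by (simp add: gauss_centered_moments) (simp add: algebra_simps)

lemma gauss_mult_ln_gauss_eq:
  assumes "0 < v"
  shows "gauss m v u * ln (gauss m v u)
    = gauss m v u * ((- ln (2 * pi * v) / 2 - m\<^sup>2 / (2 * v)) + m / v * u + (- 1 / (2 * v)) * u\<^sup>2)"
  using assms by (simp add: ln_gauss power2_eq_square field_simps)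

lemma integral_gauss_ln_gauss:
  assumes "0 < v"
  shows "(\<integral>u. gauss m v u * ln (gauss m v u) \<partial>lborel) = - ln (2 * pi * v) / 2 - 1 / 2"
  unfolding gauss_mult_ln_gauss_eq[OF assms] integral_gauss_quadratic[OF assms]
  using assms by (simp add: power2_eq_square field_simps)

lemma density_adm_gauss:
  assumes "0 < v"
  shows "density_adm (gauss m v)"
  using integrable_gauss_quadratic[OF assms, of m 0 0 1] integrable_gauss_quadratic[OF assms, of m 1 0 0]
    integral_gauss_quadratic[OF assms, of m 1 0 0] gauss_pos[OF assms]
    integrable_gauss_quadratic[OF assms, of m "- ln (2 * pi * v) / 2 - m\<^sup>2 / (2 * v)" "m / v" "- 1 / (2 * v)"]
  unfolding density_adm_def gauss_mult_ln_gauss_eq[OF assms]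
  by (auto simp: gauss_eq_normal_density less_imp_le)

lemma density_adm_integrable_quadratic:
  assumes q: "density_adm q"
  shows "integrable lborel (\<lambda>u. q u * (c0 + c1 * u + c2 * u\<^sup>2))"
proof -
  have i0: "integrable lborel q" and i2: "integrable lborel (\<lambda>u. q u * u\<^sup>2)"
    and nonneg: "\<And>u. 0 \<le> q u" and meas: "q \<in> borel_measurable borel"
    using q by (simp_all add: density_adm_def)
  have "integrable lborel (\<lambda>u. q u * u)"
  proof (rule Bochner_Integration.integrable_bound)
    show "integrable lborel (\<lambda>u. q u + q u * u\<^sup>2)"
      using i0 i2 by simp
    show "AE u in lborel. norm (q u * u) \<le> norm (q u + q u * u\<^sup>2)"
    proof (rule AE_I2)
      fix u :: real
      have "0 \<le> (\<bar>u\<bar> - 1)\<^sup>2"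
        by simp
      then have "\<bar>u\<bar> \<le> 1 + u\<^sup>2"
        by (simp add: power2_diff)
      then have "q u * \<bar>u\<bar> \<le> q u * (1 + u\<^sup>2)"
        using nonneg by (rule mult_left_mono)
      then show "norm (q u * u) \<le> norm (q u + q u * u\<^sup>2)"
        using nonneg[of u] by (simp add: abs_mult distrib_left)
    qed
  qed (use meas in simp)
  moreover have "(\<lambda>u. q u * (c0 + c1 * u + c2 * u\<^sup>2))
      = (\<lambda>u. c0 * q u + c1 * (q u * u) + c2 * (q u * u\<^sup>2))"
    by (simp add: fun_eq_iff algebra_simps)
  ultimately show ?thesis
    using i0 i2 by simp
qed

lemma diff_le_mult_ln_diff:
  fixes p q :: real
  assumes "0 < p" "0 \<le> q"
  shows "q - p \<le> q * ln q - q * ln p"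
proof (cases "q = 0")
  case False
  then have "0 < q" using assms by simp
  have "ln (p / q) \<le> p / q - 1"
    using assms \<open>0 < q\<close> by (intro ln_le_minus_one) simp
  then have "q * ln (p / q) \<le> q * (p / q - 1)"
    using \<open>0 < q\<close> by (intro mult_left_mono) auto
  moreover have "q * ln (p / q) = q * ln p - q * ln q" "q * (p / q - 1) = p - q"
    using assms \<open>0 < q\<close> by (simp_all add: ln_div right_diff_distrib)
  ultimately show ?thesis
    by simp
qed (use assms in simp)

lemma mult_ln_diff_eq_diff_imp_eq:
  fixes p q :: real
  assumes "0 < p" "0 \<le> q" and eq: "q * ln q - q * ln p = q - p"
  shows "q = p"
proof (cases "q = 0")
  case False
  then have "0 < q" using assms by simp
  have "q * ln (p / q) = q * ln p - q * ln q" "q * (p / q - 1) = p - q"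
    using assms \<open>0 < q\<close> by (simp_all add: ln_div right_diff_distrib)
  then have "q * ln (p / q) = q * (p / q - 1)"
    using eq by simp
  then have "ln (p / q) = p / q - 1"
    using \<open>0 < q\<close> by simp
  then have "p / q = 1"
    using assms \<open>0 < q\<close> by (intro ln_eq_minus_one) auto
  then show ?thesis
    using \<open>0 < q\<close> by simp
qed (use assms in simp)

lemma gibbs_inequality:
  fixes p q :: "real \<Rightarrow> real"
  assumes p: "\<And>u. 0 < p u" "integrable lborel p" "(\<integral>u. p u \<partial>lborel) = 1"
    and q: "density_adm q" and cross: "integrable lborel (\<lambda>u. q u * ln (p u))"
  shows "(\<integral>u. q u * ln (p u) \<partial>lborel) \<le> (\<integral>u. q u * ln (q u) \<partial>lborel)"
    and "(\<integral>u. q u * ln (p u) \<partial>lborel) = (\<integral>u. q u * ln (q u) \<partial>lborel) \<Longrightarrow> AE u in lborel. q u = p u"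
proof -
  have q_nonneg: "\<And>u. 0 \<le> q u"
    using q by (simp add: density_adm_def)
  define gap where "gap u = q u * ln (q u) - q u * ln (p u) - (q u - p u)" for u
  have gap_nonneg: "0 \<le> gap u" for u
    using diff_le_mult_ln_diff[OF p(1) q_nonneg] by (simp add: gap_def)
  have gap_int: "integrable lborel gap"
    using q p cross by (simp add: gap_def[abs_def] density_adm_def)
  have gap_integral: "(\<integral>u. gap u \<partial>lborel) = (\<integral>u. q u * ln (q u) \<partial>lborel) - (\<integral>u. q u * ln (p u) \<partial>lborel)"
    using q p cross by (simp add: gap_def density_adm_def)
  show "(\<integral>u. q u * ln (p u) \<partial>lborel) \<le> (\<integral>u. q u * ln (q u) \<partial>lborel)"
    using Bochner_Integration.integral_nonneg[of lborel gap] gap_nonneg gap_integral by simp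
  assume "(\<integral>u. q u * ln (p u) \<partial>lborel) = (\<integral>u. q u * ln (q u) \<partial>lborel)"
  then have "AE u in lborel. gap u = 0"
    using integral_nonneg_eq_0_iff_AE[OF gap_int] gap_nonneg gap_integral by simp
  then show "AE u in lborel. q u = p u"
    by eventually_elim (use mult_ln_diff_eq_diff_imp_eq[OF p(1) q_nonneg] in \<open>simp add: gap_def\<close>)
qed

lemma stage_cost_quadratic_eq_gibbs_gap:
  fixes rf x c :: real
  assumes R: "has_mean_var (R t) m v" and v: "0 < v" and \<alpha>: "0 < \<alpha>" and lam: "0 < lam"
    and q: "density_adm q"
  defines "P \<equiv> gauss (- (m * (rf * x - c)) / (m\<^sup>2 + v)) (lam / (2 * (m\<^sup>2 + v) * \<alpha>))"
  shows "integrable lborel (\<lambda>u. q u * ln (P u))"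
    and "stage_cost R rf lam t x (\<lambda>y. \<alpha> * (y - c)\<^sup>2 + \<beta>) q
      = \<alpha> * (rf * x - c)\<^sup>2 * v / (m\<^sup>2 + v) + \<beta> + lam / 2 * ln (\<alpha> * (m\<^sup>2 + v) / (pi * lam))
        + lam * ((\<integral>u. q u * ln (q u) \<partial>lborel) - (\<integral>u. q u * ln (P u) \<partial>lborel))"
proof -
  define S where "S = m\<^sup>2 + v"
  define d where "d = rf * x - c"
  define \<mu> where "\<mu> = - (m * d) / S"
  define c0 where "c0 = \<alpha> * d\<^sup>2 * v / S + \<beta> + lam / 2 * ln (\<alpha> * S / (pi * lam))"
  have S: "0 < S" using v by (simp add: S_def add_nonneg_pos)
  have var_pos: "0 < lam / (2 * S * \<alpha>)" using S \<alpha> lam by simp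
  have ln_var: "ln (2 * pi * (lam / (2 * S * \<alpha>))) = - ln (\<alpha> * S / (pi * lam))"
    using S \<alpha> lam by (simp add: ln_div ln_mult)
  have lam_ln_P: "lam * ln (P u) = lam / 2 * ln (\<alpha> * S / (pi * lam)) - \<alpha> * S * (u - \<mu>)\<^sup>2" for u
    unfolding P_def S_def[symmetric] d_def[symmetric] \<mu>_def[symmetric] ln_gauss[OF var_pos] ln_var
    using S \<alpha> lam by (simp add: field_simps)
  have square: "\<alpha> * S * (u - \<mu>)\<^sup>2 = \<alpha> * S * u\<^sup>2 + 2 * \<alpha> * d * m * u + \<alpha> * m\<^sup>2 * d\<^sup>2 / S" for u
    using S by (simp add: \<mu>_def power2_eq_square field_simps)
  have split: "\<alpha> * d\<^sup>2 = \<alpha> * d\<^sup>2 * v / S + \<alpha> * m\<^sup>2 * d\<^sup>2 / S"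
    using S by (simp add: field_simps) (simp add: S_def algebra_simps)
  (* This is where P comes from: lam * ln P is the constant c0 minus the expected continuation cost. *)
  have quad_eq: "\<alpha> * (d\<^sup>2 + 2 * d * m * u + S * u\<^sup>2) + \<beta> = c0 - lam * ln (P u)" for u
    unfolding lam_ln_P c0_def square using split by (simp add: ring_distribs)
  have q_int: "integrable lborel q" "(\<integral>u. q u \<partial>lborel) = 1"
    using q by (simp_all add: density_adm_def)
  have quad_int: "integrable lborel (\<lambda>u. q u * (\<alpha> * (d\<^sup>2 + 2 * d * m * u + S * u\<^sup>2) + \<beta>))"
    using density_adm_integrable_quadratic[OF q, of "\<alpha> * d\<^sup>2 + \<beta>" "2 * \<alpha> * d * m" "\<alpha> * S"]
    by (simp add: algebra_simps)
  have cross_eq: "(\<lambda>u. q u * ln (P u)) = (\<lambda>u. (c0 * q u - q u * (\<alpha> * (d\<^sup>2 + 2 * d * m * u + S * u\<^sup>2) + \<beta>)) / lam)"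
    unfolding quad_eq using lam by (simp add: fun_eq_iff field_simps)
  show cross_int: "integrable lborel (\<lambda>u. q u * ln (P u))"
    unfolding cross_eq using q_int quad_int by simp
  have "stage_cost R rf lam t x (\<lambda>y. \<alpha> * (y - c)\<^sup>2 + \<beta>) q
      = (\<integral>u. c0 * q u - lam * (q u * ln (P u)) \<partial>lborel) + lam * (\<integral>u. q u * ln (q u) \<partial>lborel)"
    unfolding stage_cost_quadratic[where R = R and t = t, OF R] d_def[symmetric] S_def[symmetric] quad_eq
    by (simp add: algebra_simps)
  also have "\<dots> = c0 + lam * ((\<integral>u. q u * ln (q u) \<partial>lborel) - (\<integral>u. q u * ln (P u) \<partial>lborel))"
    using q_int cross_int by (simp add: algebra_simps)
  finally show "stage_cost R rf lam t x (\<lambda>y. \<alpha> * (y - c)\<^sup>2 + \<beta>) q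
      = \<alpha> * (rf * x - c)\<^sup>2 * v / (m\<^sup>2 + v) + \<beta> + lam / 2 * ln (\<alpha> * (m\<^sup>2 + v) / (pi * lam))
        + lam * ((\<integral>u. q u * ln (q u) \<partial>lborel) - (\<integral>u. q u * ln (P u) \<partial>lborel))"
    by (simp add: c0_def d_def S_def)
qed

lemma stage_cost_quadratic_minimizer:
  assumes R: "has_mean_var (R t) m v" and v: "0 < v" and \<alpha>: "0 < \<alpha>" and lam: "0 < lam"
    and p: "density_adm p"
    and p_min: "\<forall>q. density_adm q \<longrightarrow> stage_cost R rf lam t x (\<lambda>y. \<alpha> * (y - c)\<^sup>2 + \<beta>) p
                                          \<le> stage_cost R rf lam t x (\<lambda>y. \<alpha> * (y - c)\<^sup>2 + \<beta>) q"
  shows "AE u in lborel. p u = gauss (- (m * (rf * x - c)) / (m\<^sup>2 + v)) (lam / (2 * (m\<^sup>2 + v) * \<alpha>)) u"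
    and "stage_cost R rf lam t x (\<lambda>y. \<alpha> * (y - c)\<^sup>2 + \<beta>) p
      = \<alpha> * (rf * x - c)\<^sup>2 * v / (m\<^sup>2 + v) + \<beta> + lam / 2 * ln (\<alpha> * (m\<^sup>2 + v) / (pi * lam))"
proof -
  define P where "P = gauss (- (m * (rf * x - c)) / (m\<^sup>2 + v)) (lam / (2 * (m\<^sup>2 + v) * \<alpha>))"
  have var_pos: "0 < lam / (2 * (m\<^sup>2 + v) * \<alpha>)"
    using v \<alpha> lam by (simp add: add_nonneg_pos)
  have P: "density_adm P" "\<And>u. 0 < P u" "integrable lborel P" "(\<integral>u. P u \<partial>lborel) = 1"
    unfolding P_def using density_adm_gauss[OF var_pos] gauss_pos[OF var_pos]
    by (simp_all add: density_adm_def)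
  note gap = stage_cost_quadratic_eq_gibbs_gap[where R = R and t = t and rf = rf and x = x and c = c,
      OF R v \<alpha> lam, folded P_def]
  have "stage_cost R rf lam t x (\<lambda>y. \<alpha> * (y - c)\<^sup>2 + \<beta>) p
     \<le> stage_cost R rf lam t x (\<lambda>y. \<alpha> * (y - c)\<^sup>2 + \<beta>) P"
    using p_min P(1) by blast
  then have "(\<integral>u. p u * ln (p u) \<partial>lborel) \<le> (\<integral>u. p u * ln (P u) \<partial>lborel)"
    unfolding gap(2)[OF p] gap(2)[OF P(1)] using lam by (simp add: mult_le_0_iff)
  with gibbs_inequality(1)[OF P(2-4) p gap(1)[OF p]]
  have no_gap: "(\<integral>u. p u * ln (P u) \<partial>lborel) = (\<integral>u. p u * ln (p u) \<partial>lborel)"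
    by linarith
  show "AE u in lborel. p u = gauss (- (m * (rf * x - c)) / (m\<^sup>2 + v)) (lam / (2 * (m\<^sup>2 + v) * \<alpha>)) u"
    using gibbs_inequality(2)[OF P(2-4) p gap(1)[OF p] no_gap] by (simp add: P_def)
  show "stage_cost R rf lam t x (\<lambda>y. \<alpha> * (y - c)\<^sup>2 + \<beta>) p
      = \<alpha> * (rf * x - c)\<^sup>2 * v / (m\<^sup>2 + v) + \<beta> + lam / 2 * ln (\<alpha> * (m\<^sup>2 + v) / (pi * lam))"
    unfolding gap(2)[OF p] no_gap by simp
qed

lemma stage_cost_quadratic_gauss:
  assumes R: "has_mean_var (R t) m v" and s: "0 < s"
  shows "stage_cost R rf lam t x (\<lambda>y. \<alpha> * (y - c)\<^sup>2 + \<beta>) (gauss \<mu> s)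
    = \<alpha> * ((rf * x - c)\<^sup>2 + 2 * (rf * x - c) * m * \<mu> + (m\<^sup>2 + v) * (s + \<mu>\<^sup>2)) + \<beta>
      - lam / 2 * ln (2 * pi * s) - lam / 2"
proof -
  have integrand: "(\<lambda>u. gauss \<mu> s u * (\<alpha> * ((rf * x - c)\<^sup>2 + 2 * (rf * x - c) * m * u + (m\<^sup>2 + v) * u\<^sup>2) + \<beta>))
     = (\<lambda>u. gauss \<mu> s u * ((\<alpha> * (rf * x - c)\<^sup>2 + \<beta>) + (2 * \<alpha> * (rf * x - c) * m) * u + (\<alpha> * (m\<^sup>2 + v)) * u\<^sup>2))"
    by (simp add: fun_eq_iff algebra_simps)
  show ?thesis
    unfolding stage_cost_quadratic[where R = R and t = t, OF R] integrand
      integral_gauss_quadratic[OF s] integral_gauss_ln_gauss[OF s]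
    by (simp add: algebra_simps)
qed

lemma rf_mult_sub_rho_Suc:
  assumes "t < T" "0 < rf"
  shows "rf * x - rho T rf (Suc t) * w = rf * (x - rho T rf t * w)"
proof -
  have "T - t = Suc (T - Suc t)"
    using assms(1) by simp
  then show ?thesis
    using assms(2) by (simp add: rho_def field_simps)
qed

lemma Acoef_eq_sum_squares: "Acoef rf a sg K = (rf + a * K)\<^sup>2 + sg\<^sup>2 * K\<^sup>2"
  by (simp add: Acoef_def power2_eq_square algebra_simps)

lemma Acoef_pos:
  assumes "0 < rf" "0 < sg"
  shows "0 < Acoef rf a sg K"
proof (cases "K = 0")
  case False
  then have "0 < sg\<^sup>2 * K\<^sup>2"
    using assms by simp
  then show ?thesis
    unfolding Acoef_eq_sum_squares by (simp add: add_nonneg_pos)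
qed (use assms in \<open>simp add: Acoef_def\<close>)

lemma fcoef_backward_step:
  assumes "Suc n \<le> T" "0 < lam" "0 < B" "0 < C" "C * Acoef rf a sg K \<noteq> 1"
  shows "fcoef T rf a sg lam b w K B C (T - Suc n)
       = fcoef T rf a sg lam b w K B C (T - n) + Acoef rf a sg K ^ n * (a\<^sup>2 + sg\<^sup>2) * (lam * B * C ^ n)
         - lam / 2 * ln (2 * pi * (lam * B * C ^ n)) - lam / 2"
proof -
  define A where "A = Acoef rf a sg K"
  have horizon: "T - (T - Suc n) = Suc n" "T - (T - n) = n"
    using assms(1) by auto
  have ln_var: "ln (2 * pi * (lam * B * C ^ n)) = ln (2 * pi * lam * B) + real n * ln C"
    using assms(2-4) by (simp add: ln_mult ln_realpow mult.assoc)
  have geometric: "lam * B * (a\<^sup>2 + sg\<^sup>2) * (1 - (C * A) ^ Suc n) / (1 - C * A)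
    = lam * B * (a\<^sup>2 + sg\<^sup>2) * (1 - (C * A) ^ n) / (1 - C * A) + A ^ n * (a\<^sup>2 + sg\<^sup>2) * (lam * B * C ^ n)"
    using assms(5) by (simp add: A_def field_simps power_mult_distrib)
  show ?thesis
    unfolding fcoef_def Let_def A_def[symmetric] horizon ln_var geometric
    by (simp add: algebra_simps add_divide_distrib)
qed

lemma polval_aux_gauss_policy:
  fixes T :: nat and rf a sg lam b w K B C :: real and R :: "nat \<Rightarrow> real measure"
    and pol :: "nat \<Rightarrow> real \<Rightarrow> real \<Rightarrow> real"
  assumes pol: "\<And>t x. t < T \<Longrightarrow> pol t x = gauss (K * (x - rho T rf t * w)) (lam * B * C ^ (T - t - 1))"
    and R: "\<forall>t<T. has_mean_var (R t) a (sg\<^sup>2)" and rf: "0 < rf" and lam: "0 < lam"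
    and B: "0 < B" and C: "0 < C" and CA: "C * Acoef rf a sg K \<noteq> 1"
  shows "n \<le> T \<Longrightarrow> polval_aux R rf lam w b T pol n x
      = Acoef rf a sg K ^ n * (x - rho T rf (T - n) * w)\<^sup>2 + fcoef T rf a sg lam b w K B C (T - n)"
proof (induction n arbitrary: x)
  case 0
  then show ?case
    by (simp add: rho_def fcoef_def)
next
  case (Suc n)
  define A where "A = Acoef rf a sg K"
  define t where "t = T - Suc n"
  define z where "z = x - rho T rf t * w"
  define s where "s = lam * B * C ^ n"
  have t: "t < T" "Suc t = T - n" "T - t - 1 = n" "T - Suc t = n"
    using Suc.prems by (auto simp: t_def)
  have Rt: "has_mean_var (R t) a (sg\<^sup>2)"
    using R t(1) by simp
  have s: "0 < s"
    using lam B C by (simp add: s_def)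
  have "polval_aux R rf lam w b T pol n = (\<lambda>y. A ^ n * (y - rho T rf (Suc t) * w)\<^sup>2 + fcoef T rf a sg lam b w K B C (T - n))"
    using Suc by (simp add: fun_eq_iff A_def t)
  then have "polval_aux R rf lam w b T pol (Suc n) x
    = stage_cost R rf lam t x (\<lambda>y. A ^ n * (y - rho T rf (Suc t) * w)\<^sup>2 + fcoef T rf a sg lam b w K B C (T - n))
        (gauss (K * z) s)"
    by (simp add: pol[OF t(1)] t(3,4) z_def s_def flip: t_def)
  also have "\<dots> = A ^ n * ((rf * z)\<^sup>2 + 2 * (rf * z) * a * (K * z) + (a\<^sup>2 + sg\<^sup>2) * (s + (K * z)\<^sup>2))
      + fcoef T rf a sg lam b w K B C (T - n) - lam / 2 * ln (2 * pi * s) - lam / 2"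
    unfolding stage_cost_quadratic_gauss[where R = R and t = t, OF Rt s] rf_mult_sub_rho_Suc[OF t(1) rf] z_def
    by simp
  also have "\<dots> = A ^ Suc n * z\<^sup>2
      + (fcoef T rf a sg lam b w K B C (T - n) + A ^ n * (a\<^sup>2 + sg\<^sup>2) * s - lam / 2 * ln (2 * pi * s) - lam / 2)"
    by (simp add: A_def Acoef_def power2_eq_square algebra_simps)
  also have "\<dots> = A ^ Suc n * z\<^sup>2 + fcoef T rf a sg lam b w K B C (T - Suc n)"
    using fcoef_backward_step[OF Suc.prems lam B C CA] by (simp add: A_def s_def)
  finally show ?case
    by (simp add: A_def z_def t_def)
qed

definition iter_offset ::
  "nat \<Rightarrow> real \<Rightarrow> real \<Rightarrow> real \<Rightarrow> real \<Rightarrow> real \<Rightarrow> real \<Rightarrow> real \<Rightarrow> real \<Rightarrow> real \<Rightarrow> nat \<Rightarrow> nat \<Rightarrow> real" where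
  "iter_offset T rf a sg lam b w K B C k t =
     lam / 2 * real k * ln ((a\<^sup>2 + sg\<^sup>2) / (pi * lam))
   + lam / 2 * (\<Sum>i<k. real i * ln (sg\<^sup>2 * rf\<^sup>2 / (a\<^sup>2 + sg\<^sup>2)))
   + lam * ln (Acoef rf a sg K) / 2 * real k * real (T - t - k)
   + fcoef T rf a sg lam b w K B C (t + k)"

lemma iter_offset_Suc:
  assumes "t + Suc k \<le> T" "0 < rf" "0 < sg" "0 < lam"
  shows "iter_offset T rf a sg lam b w K B C (Suc k) t
    = iter_offset T rf a sg lam b w K B C k (Suc t)
      + lam / 2 * ln (Acoef rf a sg K ^ (T - t - Suc k) * (sg\<^sup>2 * rf\<^sup>2 / (a\<^sup>2 + sg\<^sup>2)) ^ k
                      * (a\<^sup>2 + sg\<^sup>2) / (pi * lam))"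
proof -
  define A where "A = Acoef rf a sg K"
  define S where "S = a\<^sup>2 + sg\<^sup>2"
  define Q where "Q = sg\<^sup>2 * rf\<^sup>2 / S"
  define m where "m = T - t - Suc k"
  have pos: "0 < A" "0 < S" "0 < Q"
    using assms Acoef_pos by (simp_all add: A_def S_def Q_def add_nonneg_pos)
  have horizon: "T - Suc t - k = m" "Suc t + k = t + Suc k"
    by (simp_all add: m_def)
  have "ln (A ^ m * Q ^ k * S / (pi * lam)) = real m * ln A + real k * ln Q + ln (S / (pi * lam))"
    using pos assms(4) by (simp add: ln_mult ln_div ln_realpow)
  then show ?thesis
    unfolding iter_offset_def A_def[symmetric] S_def[symmetric] Q_def[symmetric] m_def[symmetric] horizon
    by (simp add: algebra_simps add_divide_distrib)
qed

lemma improvement_step_quadratic: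
  fixes T :: nat and rf a sg lam b w K B C x :: real
  assumes R: "has_mean_var (R t) a (sg\<^sup>2)" and rf: "0 < rf" and sg: "0 < sg" and lam: "0 < lam"
    and tk: "t + Suc k \<le> T"
  defines "V \<equiv> \<lambda>y. Acoef rf a sg K ^ (T - Suc t - k) * (sg\<^sup>2 * rf\<^sup>2 / (a\<^sup>2 + sg\<^sup>2)) ^ k
                    * (y - rho T rf (Suc t) * w)\<^sup>2 + iter_offset T rf a sg lam b w K B C k (Suc t)"
  assumes p: "density_adm p"
    and p_min: "\<forall>q. density_adm q \<longrightarrow> stage_cost R rf lam t x V p \<le> stage_cost R rf lam t x V q"
  shows "AE u in lborel. p u = gauss (- (a * rf * (x - rho T rf t * w)) / (a\<^sup>2 + sg\<^sup>2))
           (lam / (2 * (a\<^sup>2 + sg\<^sup>2) * Acoef rf a sg K ^ (T - t - Suc k)) * ((a\<^sup>2 + sg\<^sup>2) / (sg\<^sup>2 * rf\<^sup>2)) ^ k) u"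
    and "stage_cost R rf lam t x V p
      = Acoef rf a sg K ^ (T - t - Suc k) * (sg\<^sup>2 * rf\<^sup>2 / (a\<^sup>2 + sg\<^sup>2)) ^ Suc k * (x - rho T rf t * w)\<^sup>2
        + iter_offset T rf a sg lam b w K B C (Suc k) t"
proof -
  define A where "A = Acoef rf a sg K"
  define S where "S = a\<^sup>2 + sg\<^sup>2"
  define Q where "Q = sg\<^sup>2 * rf\<^sup>2 / S"
  define m where "m = T - t - Suc k"
  define z where "z = x - rho T rf t * w"
  have pos: "0 < A" "0 < S" "0 < Q" "0 < sg\<^sup>2"
    using rf sg Acoef_pos by (simp_all add: A_def S_def Q_def add_nonneg_pos)
  have "T - Suc t - k = m"
    by (simp add: m_def)
  then have V: "V = (\<lambda>y. (A ^ m * Q ^ k) * (y - rho T rf (Suc t) * w)\<^sup>2 + iter_offset T rf a sg lam b w K B C k (Suc t))"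
    by (simp add: V_def A_def S_def Q_def)
  have shift: "rf * x - rho T rf (Suc t) * w = rf * z"
    using tk rf by (simp add: rf_mult_sub_rho_Suc z_def)
  note min = stage_cost_quadratic_minimizer[where R = R and t = t and m = a and v = "sg\<^sup>2",
      OF R pos(4) mult_pos_pos[OF zero_less_power[OF pos(1)] zero_less_power[OF pos(3)]] lam p p_min[unfolded V],
      unfolded shift S_def[symmetric]]
  have "lam / (2 * S * (A ^ m * Q ^ k)) = lam / (2 * S * A ^ m) * (S / (sg\<^sup>2 * rf\<^sup>2)) ^ k"
    using pos by (simp add: Q_def power_divide)
  then show "AE u in lborel. p u = gauss (- (a * rf * (x - rho T rf t * w)) / (a\<^sup>2 + sg\<^sup>2))
           (lam / (2 * (a\<^sup>2 + sg\<^sup>2) * Acoef rf a sg K ^ (T - t - Suc k)) * ((a\<^sup>2 + sg\<^sup>2) / (sg\<^sup>2 * rf\<^sup>2)) ^ k) u"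
    using min(1) by (simp add: A_def S_def m_def z_def mult.assoc)
  have "stage_cost R rf lam t x V p
      = A ^ m * Q ^ k * (rf * z)\<^sup>2 * sg\<^sup>2 / S + iter_offset T rf a sg lam b w K B C k (Suc t)
        + lam / 2 * ln (A ^ m * Q ^ k * S / (pi * lam))"
    unfolding V by (rule min(2))
  also have "\<dots> = A ^ m * Q ^ Suc k * z\<^sup>2 + iter_offset T rf a sg lam b w K B C (Suc k) t"
    using iter_offset_Suc[OF tk rf sg lam]
    by (simp add: A_def S_def Q_def m_def power2_eq_square)
  finally show "stage_cost R rf lam t x V p
      = Acoef rf a sg K ^ (T - t - Suc k) * (sg\<^sup>2 * rf\<^sup>2 / (a\<^sup>2 + sg\<^sup>2)) ^ Suc k * (x - rho T rf t * w)\<^sup>2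
        + iter_offset T rf a sg lam b w K B C (Suc k) t"
    by (simp add: A_def S_def Q_def m_def z_def)
qed

context
  fixes T :: nat and rf a sg lam b w K B C :: real
    and R :: "nat \<Rightarrow> real measure"
    and Pol :: "nat \<Rightarrow> nat \<Rightarrow> real \<Rightarrow> real \<Rightarrow> real"
    and J :: "nat \<Rightarrow> nat \<Rightarrow> real \<Rightarrow> real"
  assumes R: "\<forall>t<T. has_mean_var (R t) a (sg\<^sup>2)" and rf: "0 < rf" and sg: "0 < sg" and lam: "0 < lam"
    and J0: "\<forall>t x. t \<le> T \<longrightarrow>
               J 0 t x = Acoef rf a sg K ^ (T - t) * (x - rho T rf t * w)\<^sup>2 + fcoef T rf a sg lam b w K B C t"
    and step: "\<forall>k t x. t + k + 1 \<le> T \<longrightarrow>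
               density_adm (Pol (Suc k) t x)
             \<and> (\<forall>q. density_adm q \<longrightarrow>
                    stage_cost R rf lam t x (J k (Suc t)) (Pol (Suc k) t x)
                      \<le> stage_cost R rf lam t x (J k (Suc t)) q)
             \<and> J (Suc k) t x = stage_cost R rf lam t x (J k (Suc t)) (Pol (Suc k) t x)"
begin

lemma value_iteration_quadratic:
  "t + k \<le> T \<Longrightarrow> J k t x = Acoef rf a sg K ^ (T - t - k) * (sg\<^sup>2 * rf\<^sup>2 / (a\<^sup>2 + sg\<^sup>2)) ^ k
                                  * (x - rho T rf t * w)\<^sup>2 + iter_offset T rf a sg lam b w K B C k t"
proof (induction k arbitrary: t x)
  case 0
  then show ?case
    using J0 by (simp add: iter_offset_def)
next
  case (Suc k)
  have Rt: "has_mean_var (R t) a (sg\<^sup>2)"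
    using R Suc.prems by simp
  have "J k (Suc t) = (\<lambda>y. Acoef rf a sg K ^ (T - Suc t - k) * (sg\<^sup>2 * rf\<^sup>2 / (a\<^sup>2 + sg\<^sup>2)) ^ k
                         * (y - rho T rf (Suc t) * w)\<^sup>2 + iter_offset T rf a sg lam b w K B C k (Suc t))"
    using Suc by (simp add: fun_eq_iff)
  moreover have "density_adm (Pol (Suc k) t x)"
    and "\<forall>q. density_adm q \<longrightarrow> stage_cost R rf lam t x (J k (Suc t)) (Pol (Suc k) t x)
                                  \<le> stage_cost R rf lam t x (J k (Suc t)) q"
    and "J (Suc k) t x = stage_cost R rf lam t x (J k (Suc t)) (Pol (Suc k) t x)"
    using step Suc.prems by auto
  ultimately show ?case
    using improvement_step_quadratic(2)[where R = R and t = t, OF Rt rf sg lam Suc.prems] by simp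
qed

lemma policy_iteration_gauss:
  assumes "1 \<le> k" "t + k \<le> T"
  shows "AE u in lborel. Pol k t x u = gauss (- (a * rf * (x - rho T rf t * w)) / (a\<^sup>2 + sg\<^sup>2))
           (lam / (2 * (a\<^sup>2 + sg\<^sup>2) * Acoef rf a sg K ^ (T - t - k)) * ((a\<^sup>2 + sg\<^sup>2) / (sg\<^sup>2 * rf\<^sup>2)) ^ (k - 1)) u"
proof -
  obtain j where k: "k = Suc j"
    using assms(1) by (cases k) auto
  have tj: "t + Suc j \<le> T" and Rt: "has_mean_var (R t) a (sg\<^sup>2)"
    using assms(2) R by (simp_all add: k)
  have "J j (Suc t) = (\<lambda>y. Acoef rf a sg K ^ (T - Suc t - j) * (sg\<^sup>2 * rf\<^sup>2 / (a\<^sup>2 + sg\<^sup>2)) ^ j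
                         * (y - rho T rf (Suc t) * w)\<^sup>2 + iter_offset T rf a sg lam b w K B C j (Suc t))"
    using value_iteration_quadratic tj by (simp add: fun_eq_iff)
  moreover have "density_adm (Pol (Suc j) t x)"
    and "\<forall>q. density_adm q \<longrightarrow> stage_cost R rf lam t x (J j (Suc t)) (Pol (Suc j) t x)
                                  \<le> stage_cost R rf lam t x (J j (Suc t)) q"
    using step tj by auto
  ultimately show ?thesis
    using improvement_step_quadratic(1)[where R = R and t = t, OF Rt rf sg lam tj] by (simp add: k)
qed

end

theorem theorem2:
  fixes T :: nat and rf a sg lam b w K B C :: real
    and R :: "nat \<Rightarrow> real measure"
    and Pol :: "nat \<Rightarrow> nat \<Rightarrow> real \<Rightarrow> real \<Rightarrow> real"
    and J :: "nat \<Rightarrow> nat \<Rightarrow> real \<Rightarrow> real"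
  defines "A \<equiv> Acoef rf a sg K"
    and "pi0 \<equiv> (\<lambda>t x u. gauss (K * (x - rho T rf t * w)) (lam * B * C ^ (T - t - 1)) u)"
  assumes hT: "T \<ge> 1" and hrf: "rf > 0" and hsig: "sg > 0" and hlam: "lam > 0"
    and hB: "B > 0" and hC: "C > 0" and hCA: "C * A \<noteq> 1"
    and hR: "\<forall>t<T. prob_space (R t) \<and> sets (R t) = sets borel
               \<and> integrable (R t) (\<lambda>r. r\<^sup>2)
               \<and> (\<integral>r. r \<partial>R t) = a \<and> (\<integral>r. (r - a)\<^sup>2 \<partial>R t) = sg\<^sup>2"
    and hJ0: "\<forall>t x. t \<le> T \<longrightarrow> J 0 t x = value_fun R rf lam w b T pi0 t x"
    and hstep: "\<forall>k t x. t + k + 1 \<le> T \<longrightarrow>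
               density_adm (Pol (Suc k) t x)
             \<and> (\<forall>q. density_adm q \<longrightarrow>
                    stage_cost R rf lam t x (J k (Suc t)) (Pol (Suc k) t x)
                      \<le> stage_cost R rf lam t x (J k (Suc t)) q)
             \<and> J (Suc k) t x = stage_cost R rf lam t x (J k (Suc t)) (Pol (Suc k) t x)"
  shows "(\<forall>t x. t \<le> T \<longrightarrow>
            value_fun R rf lam w b T pi0 t x
              = A ^ (T - t) * (x - rho T rf t * w)\<^sup>2 + fcoef T rf a sg lam b w K B C t)
       \<and> (\<forall>k t x. 1 \<le> k \<and> k \<le> T - t \<longrightarrow>
            (AE u in lborel. Pol k t x u =
               gauss (- (a * rf * (x - rho T rf t * w)) / (a\<^sup>2 + sg\<^sup>2))
                     (lam / (2 * (a\<^sup>2 + sg\<^sup>2) * A ^ (T - t - k))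
                        * ((a\<^sup>2 + sg\<^sup>2) / (sg\<^sup>2 * rf\<^sup>2)) ^ (k - 1)) u)
          \<and> J k t x = A ^ (T - t - k) * (sg\<^sup>2 * rf\<^sup>2 / (a\<^sup>2 + sg\<^sup>2)) ^ k * (x - rho T rf t * w)\<^sup>2
              + lam / 2 * real k * ln ((a\<^sup>2 + sg\<^sup>2) / (pi * lam))
              + lam / 2 * (\<Sum>i<k. real i * ln (sg\<^sup>2 * rf\<^sup>2 / (a\<^sup>2 + sg\<^sup>2)))
              + lam * ln A / 2 * real k * real (T - t - k)
              + fcoef T rf a sg lam b w K B C (t + k))"
proof -
  have R: "\<forall>t<T. has_mean_var (R t) a (sg\<^sup>2)"
    using hR by (simp add: has_mean_var_def)
  have pi0: "value_fun R rf lam w b T pi0 t x = A ^ (T - t) * (x - rho T rf t * w)\<^sup>2 + fcoef T rf a sg lam b w K B C t"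
    if "t \<le> T" for t x
    using polval_aux_gauss_policy[of T pi0, OF _ R hrf hlam hB hC hCA[unfolded A_def]] that
    by (simp add: value_fun_def A_def pi0_def)
  have J0: "\<forall>t x. t \<le> T \<longrightarrow> J 0 t x = A ^ (T - t) * (x - rho T rf t * w)\<^sup>2 + fcoef T rf a sg lam b w K B C t"
    using hJ0 pi0 by simp
  show ?thesis
    using pi0 value_iteration_quadratic[OF R hrf hsig hlam J0[unfolded A_def] hstep]
      policy_iteration_gauss[OF R hrf hsig hlam J0[unfolded A_def] hstep]
    by (auto simp: A_def iter_offset_def add.assoc)
qed

end
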